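(* There is an absolute constant $c>0$ such that for every $\delta'\in(0,1)$, with probability at least $1-2\delta'$ over the draw of $\mathcal D$, simultaneously for all $V\in\mathcal V$ and $\pi\in\mathcal P$, $$\Big|\mathscr R_{\mathcal D}(\hat g_{V,\pi};V,\pi)-\mathscr R_{\mathcal D}(\mathcal C^\pi_\lambda V;V,\pi)\Big|\le c\left(\epsilon_{\mathcal G,\mathcal V,\mathcal P}+\sqrt{\frac{\iota}{n}\epsilon_{\mathcal G,\mathcal V,\mathcal P}}+\frac{\iota}{n}\right),$$ where $\iota=V_{\lambda,\max}^2\ln\frac{|\mathcal V||\mathcal P||\mathcal G|}{\delta'}$ and $\hat g_{V,\pi}\in\arg\min_{g\in\mathcal G}\mathscr R_{\mathcal D}(g;V,\pi)$.
   Context: Finite MDP with state space $\mathcal S$, action space $\mathcal A$, discount $\gamma\in[0,1)$, kernel $P$, reward $R:\mathcal S\times\mathcal A\to[0,R_{\max}]$; $\lambda>0$. $(\mathbb PV)(s,a)=\sum_{s'}P(s'\mid s,a)V(s')$; $(\mathcal C^\pi_\lambda V)(s,a)=R(s,a)+\gamma(\mathbb PV)(s,a)-\lambda\ln\pi(a\mid s)$. $\mu\in\Delta(\mathcal S\times\mathcal A)$, $\|f\|^2_{2,\mu}=\mathbb E_{\mu}[f(s,a)^2]$. $V_{\lambda,\max}=(R_{\max}+\lambda\ln|\mathcal A|)/(1-\gamma)$. Finite classes $\mathcal V\subset[0,V_{\lambda,\max}]^{\mathcal S}$, $\mathcal P\subset\{\pi:\|\ln\pi\|_\infty\le V_{\lambda,\max}/\lambda\}$,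 $\mathcal G\subset[0,2V_{\lambda,\max}]^{\mathcal S\times\mathcal A}$. Dataset $\mathcal D=\{(s_i,a_i,r_i,s_i')\}_{i=1}^n$ with $(s_i,a_i)$ i.i.d. from $\mu$, $r_i=R(s_i,a_i)$, $s_i'\sim P(\cdot\mid s_i,a_i)$ independently. For a function $g:\mathcal S\times\mathcal A\to\mathbb R$, $\mathscr R_{\mathcal D}(g;V,\pi)=\frac1n\sum_i\big(g(s_i,a_i)-r_i-\gamma V(s_i')+\lambda\ln\pi(a_i\mid s_i)\big)^2$. $\epsilon_{\mathcal G,\mathcal V,\mathcal P}=\max_{V\in\mathcal V,\pi\in\mathcal P}\min_{g\in\mathcal G}\|g-\mathcal C^\pi_\lambda V\|^2_{2,\mu}$. *)

theory Defs
  imports "HOL-Probability.Probability"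
begin

text \<open>Functions are required to vanish outside
their domain (extensional representation), so that the finite classes count
genuinely distinct functions on S (resp. S x A).\<close>

definition Vmax :: "nat set \<Rightarrow> real \<Rightarrow> real \<Rightarrow> real \<Rightarrow> real" where
  "Vmax A Rmax \<gamma> lam = (Rmax + lam * ln (real (card A))) / (1 - \<gamma>)"

definition bellman ::
  "(nat \<Rightarrow> nat \<Rightarrow> real) \<Rightarrow> (nat \<Rightarrow> nat \<Rightarrow> nat pmf) \<Rightarrow> real \<Rightarrow> real \<Rightarrow>
   (nat \<Rightarrow> real) \<Rightarrow> (nat \<Rightarrow> nat \<Rightarrow> real) \<Rightarrow> nat \<Rightarrow> nat \<Rightarrow> real" where
  "bellman R P \<gamma> lam V \<pi> s a =
     R s a + \<gamma> * measure_pmf.expectation (P s a) V - lam * ln (\<pi> s a)"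

definition sqnorm :: "(nat \<times> nat) pmf \<Rightarrow> (nat \<Rightarrow> nat \<Rightarrow> real) \<Rightarrow> real" where
  "sqnorm \<mu> f = measure_pmf.expectation \<mu> (\<lambda>(s, a). (f s a)\<^sup>2)"

text \<open>Empirical risk; the dataset is D : {0..<n} -> (s_i, a_i, s_i'), with r_i = R s_i a_i.\<close>
definition emp_risk ::
  "(nat \<Rightarrow> nat \<Rightarrow> real) \<Rightarrow> real \<Rightarrow> real \<Rightarrow> nat \<Rightarrow> (nat \<Rightarrow> nat \<times> nat \<times> nat) \<Rightarrow>
   (nat \<Rightarrow> nat \<Rightarrow> real) \<Rightarrow> (nat \<Rightarrow> real) \<Rightarrow> (nat \<Rightarrow> nat \<Rightarrow> real) \<Rightarrow> real" where
  "emp_risk R \<gamma> lam n D g V \<pi> =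
     (\<Sum>i<n. (case D i of (s, a, s') \<Rightarrow>
        (g s a - R s a - \<gamma> * V s' + lam * ln (\<pi> s a))\<^sup>2)) / real n"

definition eps_approx ::
  "(nat \<times> nat) pmf \<Rightarrow> (nat \<Rightarrow> nat \<Rightarrow> real) \<Rightarrow> (nat \<Rightarrow> nat \<Rightarrow> nat pmf) \<Rightarrow> real \<Rightarrow> real \<Rightarrow>
   (nat \<Rightarrow> real) set \<Rightarrow> (nat \<Rightarrow> nat \<Rightarrow> real) set \<Rightarrow> (nat \<Rightarrow> nat \<Rightarrow> real) set \<Rightarrow> real" where
  "eps_approx \<mu> R P \<gamma> lam Vs Ps Gs =
     Max ((\<lambda>(V, \<pi>). Min ((\<lambda>g. sqnorm \<mu> (\<lambda>s a. g s a - bellman R P \<gamma> lam V \<pi> s a)) ` Gs))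
          ` (Vs \<times> Ps))"

definition sample_pmf :: "(nat \<times> nat) pmf \<Rightarrow> (nat \<Rightarrow> nat \<Rightarrow> nat pmf) \<Rightarrow> (nat \<times> nat \<times> nat) pmf" where
  "sample_pmf \<mu> P = bind_pmf \<mu> (\<lambda>(s, a). map_pmf (\<lambda>s'. (s, a, s')) (P s a))"

definition dataset_pmf :: "(nat \<times> nat) pmf \<Rightarrow> (nat \<Rightarrow> nat \<Rightarrow> nat pmf) \<Rightarrow> nat \<Rightarrow> (nat \<Rightarrow> nat \<times> nat \<times> nat) pmf" where
  "dataset_pmf \<mu> P n = Pi_pmf {..<n} (0, 0, 0) (\<lambda>_. sample_pmf \<mu> P)"

definition setting ::
  "nat set \<Rightarrow> nat set \<Rightarrow> real \<Rightarrow> real \<Rightarrow> real \<Rightarrow> (nat \<Rightarrow> nat \<Rightarrow> nat pmf) \<Rightarrow>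
   (nat \<Rightarrow> nat \<Rightarrow> real) \<Rightarrow> (nat \<times> nat) pmf \<Rightarrow>
   (nat \<Rightarrow> real) set \<Rightarrow> (nat \<Rightarrow> nat \<Rightarrow> real) set \<Rightarrow> (nat \<Rightarrow> nat \<Rightarrow> real) set \<Rightarrow> bool" where
  "setting S A \<gamma> Rmax lam P R \<mu> Vs Ps Gs \<longleftrightarrow>
     finite S \<and> S \<noteq> {} \<and> finite A \<and> A \<noteq> {} \<and>
     0 \<le> \<gamma> \<and> \<gamma> < 1 \<and> 0 < lam \<and>
     (\<forall>s\<in>S. \<forall>a\<in>A. set_pmf (P s a) \<subseteq> S) \<and>
     (\<forall>s\<in>S. \<forall>a\<in>A. 0 \<le> R s a \<and> R s a \<le> Rmax) \<and>
     set_pmf \<mu> \<subseteq> S \<times> A \<and>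
     finite Vs \<and> Vs \<noteq> {} \<and> finite Ps \<and> Ps \<noteq> {} \<and> finite Gs \<and> Gs \<noteq> {} \<and>
     (\<forall>V\<in>Vs. (\<forall>s\<in>S. 0 \<le> V s \<and> V s \<le> Vmax A Rmax \<gamma> lam) \<and> (\<forall>s. s \<notin> S \<longrightarrow> V s = 0)) \<and>
     (\<forall>\<pi>\<in>Ps. (\<forall>s\<in>S. (\<Sum>a\<in>A. \<pi> s a) = 1 \<and>
                 (\<forall>a\<in>A. 0 < \<pi> s a \<and> \<bar>ln (\<pi> s a)\<bar> \<le> Vmax A Rmax \<gamma> lam / lam)) \<and>
              (\<forall>s a. (s \<notin> S \<or> a \<notin> A) \<longrightarrow> \<pi> s a = 0)) \<and>
     (\<forall>g\<in>Gs. (\<forall>s\<in>S. \<forall>a\<in>A. 0 \<le> g s a \<and> g s a \<le> 2 * Vmax A Rmax \<gamma> lam) \<and>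
              (\<forall>s a. (s \<notin> S \<or> a \<notin> A) \<longrightarrow> g s a = 0))"

end

theory Submission
  imports Defs
begin

text \<open>Fix V, \<pi>, g; let f be the soft Bellman backup of V under \<pi> and
  y = r + \<gamma> V(s') - \<lambda> ln \<pi>(a|s) the regression target, so that E[y | s, a] = f(s, a).
  The difference \<Delta> of the empirical risks of g and f is the sample mean of the excess loss
  (g - y)^2 - (f - y)^2 = (g - f)(g + f - 2y), whose mean is the Bellman error d = \<parallel>g - f\<parallel>^2
  and whose second moment is at most 121 W^2 d, where W = V_max. Bernstein's inequality and a
  union bound over the three classes give |\<Delta> - d| \<le> 22 sqrt(d x) + 220 x, x = \<iota>/n, for all
  triples at once with probability at least 1 - 2\<delta>. For an empirical minimiser g, comparing
  with an h \<in> G with d(h) \<le> \<epsilon> bounds \<Delta> from above, and d - 22 sqrt(d x) \<ge> -121 x bounds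
  it from below.\<close>

section \<open>Bernstein inequality for i.i.d. samples\<close>

lemma exp_le_1_plus_x_plus_sq:
  fixes x :: real
  assumes "x \<le> 1"
  shows "exp x \<le> 1 + x + x\<^sup>2"
proof (cases "0 \<le> x")
  case True
  then show ?thesis using exp_bound assms by blast
next
  case False
  have "exp x * (1 - x) \<le> exp x * exp (- x)"
    using exp_ge_add_one_self[of "- x"] by (intro mult_left_mono) auto
  also have "\<dots> = 1"
    by (simp add: exp_minus)
  also have "\<dots> \<le> 1 - x ^ 3"
    using False by (simp add: power3_eq_cube mult_nonneg_nonpos)
  also have "\<dots> = (1 + x + x\<^sup>2) * (1 - x)"
    by (simp add: algebra_simps power2_eq_square power3_eq_cube)
  finally show ?thesis
    using False by simp
qed

lemma expectation_exp_le_exp_variance: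
  fixes p :: "'a pmf" and \<phi> :: "'a \<Rightarrow> real"
  assumes fin: "finite (set_pmf p)" and t: "0 \<le> t"
    and bnd: "\<And>z. z \<in> set_pmf p \<Longrightarrow> t * \<bar>\<phi> z\<bar> \<le> 1"
    and mean: "measure_pmf.expectation p \<phi> = 0"
    and var: "measure_pmf.expectation p (\<lambda>z. (\<phi> z)\<^sup>2) \<le> v"
  shows "measure_pmf.expectation p (\<lambda>z. exp (t * \<phi> z)) \<le> exp (t\<^sup>2 * v)"
proof -
  have int: "integrable (measure_pmf p) f" for f :: "'a \<Rightarrow> real"
    using fin by (rule integrable_measure_pmf_finite)
  have "measure_pmf.expectation p (\<lambda>z. exp (t * \<phi> z))
      \<le> measure_pmf.expectation p (\<lambda>z. 1 + t * \<phi> z + t\<^sup>2 * (\<phi> z)\<^sup>2)"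
  proof (intro integral_mono_AE int AE_pmfI)
    fix z assume "z \<in> set_pmf p"
    then have "t * \<phi> z \<le> 1"
      using bnd t by (smt (verit) abs_ge_self mult_left_mono)
    then show "exp (t * \<phi> z) \<le> 1 + t * \<phi> z + t\<^sup>2 * (\<phi> z)\<^sup>2"
      using exp_le_1_plus_x_plus_sq[of "t * \<phi> z"] by (simp add: power_mult_distrib)
  qed
  also have "\<dots> = 1 + t\<^sup>2 * measure_pmf.expectation p (\<lambda>z. (\<phi> z)\<^sup>2)"
    using mean by (simp add: int)
  also have "\<dots> \<le> 1 + t\<^sup>2 * v"
    using var by (simp add: mult_left_mono)
  also have "\<dots> \<le> exp (t\<^sup>2 * v)"
    by (rule exp_ge_add_one_self)
  finally show ?thesis .
qed

lemma prob_Pi_pmf_sum_gt_le: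
  fixes p :: "'a pmf" and \<phi> :: "'a \<Rightarrow> real"
  assumes fin: "finite (set_pmf p)" and t: "0 \<le> t"
    and mgf: "measure_pmf.expectation p (\<lambda>z. exp (t * \<phi> z)) \<le> m"
  shows "measure_pmf.prob (Pi_pmf {..<n} d (\<lambda>_. p)) {D. u < (\<Sum>i<n. \<phi> (D i))}
         \<le> exp (- t * u) * m ^ n"
proof -
  define Q where "Q = Pi_pmf {..<n} d (\<lambda>_. p)"
  have "finite (set_pmf Q)"
    unfolding Q_def using fin by (subst set_Pi_pmf) auto
  then have int: "integrable (measure_pmf Q) f" for f :: "_ \<Rightarrow> real"
    by (rule integrable_measure_pmf_finite)
  let ?A = "{D. u < (\<Sum>i<n. \<phi> (D i))}"
  have "measure_pmf.prob Q ?A = measure_pmf.expectation Q (indicator ?A)"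
    by simp
  also have "\<dots> \<le> measure_pmf.expectation Q (\<lambda>D. exp (t * ((\<Sum>i<n. \<phi> (D i)) - u)))"
    using t by (intro integral_mono int) (auto simp: indicator_def)
  also have "\<dots> = exp (- t * u) * measure_pmf.expectation Q (\<lambda>D. \<Prod>i<n. exp (t * \<phi> (D i)))"
    by (simp add: exp_sum[symmetric] exp_diff sum_distrib_left right_diff_distrib exp_minus
        field_simps)
  also have "measure_pmf.expectation Q (\<lambda>D. \<Prod>i<n. exp (t * \<phi> (D i)))
      = measure_pmf.expectation p (\<lambda>z. exp (t * \<phi> z)) ^ n"
    unfolding Q_def
    by (subst expectation_prod_Pi_pmf) (auto intro: integrable_measure_pmf_finite[OF fin])
  also have "\<dots> \<le> m ^ n"
    by (intro power_mono mgf integral_nonneg_AE) auto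
  finally show ?thesis
    unfolding Q_def by simp
qed

text \<open>The Chernoff parameter is \<open>t = min (1 / b) (sqrt (L / x))\<close>.\<close>

lemma bernstein_exponent_choice:
  fixes b x L :: real
  assumes b: "0 < b" and x: "0 \<le> x" and L: "0 \<le> L"
  shows "\<exists>t. 0 \<le> t \<and> t * b \<le> 1 \<and> - t * (2 * sqrt (x * L) + 2 * b * L) + x * t\<^sup>2 \<le> - L"
proof (cases "x \<le> L * b\<^sup>2")
  case True
  have "(1 / b) * (2 * b * L) \<le> (1 / b) * (2 * sqrt (x * L) + 2 * b * L)"
    using b x L by (intro mult_left_mono) auto
  then have "- (1 / b) * (2 * sqrt (x * L) + 2 * b * L) \<le> - 2 * L"
    using b by simp
  moreover have "x * (1 / b)\<^sup>2 \<le> L"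
    using True b by (simp add: power2_eq_square field_simps)
  ultimately show ?thesis
    using b by (intro exI[of _ "1 / b"]) auto
next
  case False
  then have x_pos: "0 < x"
    using L b by (smt (verit) mult_nonneg_nonneg zero_le_power2)
  define t where "t = sqrt (L / x)"
  have t0: "0 \<le> t" and t2: "t\<^sup>2 = L / x"
    unfolding t_def using L x by simp_all
  have "(t * b)\<^sup>2 = L * b\<^sup>2 / x"
    using t2 by (simp add: power_mult_distrib)
  also have "\<dots> \<le> 1"
    using False x_pos by simp
  finally have "t * b \<le> 1"
    using power2_le_imp_le[of "t * b" 1] by simp
  moreover have "t * sqrt (x * L) = L"
    unfolding t_def using L x_pos by (simp add: real_sqrt_mult[symmetric])
  moreover have "0 \<le> t * b * L" "x * t\<^sup>2 = L"
    using t0 b L t2 x_pos by simp_all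
  ultimately show ?thesis
    using t0 by (intro exI[of _ t]) (simp add: algebra_simps)
qed

lemma bernstein_Pi_pmf:
  fixes p :: "'a pmf" and \<phi> :: "'a \<Rightarrow> real"
  assumes fin: "finite (set_pmf p)" and b: "0 \<le> b"
    and bnd: "\<And>z. z \<in> set_pmf p \<Longrightarrow> \<bar>\<phi> z\<bar> \<le> b"
    and mean: "measure_pmf.expectation p \<phi> = 0"
    and var: "measure_pmf.expectation p (\<lambda>z. (\<phi> z)\<^sup>2) \<le> v" and L: "0 \<le> L"
  shows "measure_pmf.prob (Pi_pmf {..<n} d (\<lambda>_. p))
           {D. 2 * sqrt (real n * v * L) + 2 * b * L < (\<Sum>i<n. \<phi> (D i))} \<le> exp (- L)"
proof -
  have "0 \<le> measure_pmf.expectation p (\<lambda>z. (\<phi> z)\<^sup>2)"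
    by (rule integral_nonneg_AE) auto
  then have v: "0 \<le> v"
    using var by linarith
  show ?thesis
  proof (cases "b = 0")
    case True
    have "0 \<le> real n * v * L"
      using v L by simp
    have "(\<Sum>i<n. \<phi> (D i)) = 0" if "D \<in> set_pmf (Pi_pmf {..<n} d (\<lambda>_. p))" for D
      using that bnd True by (intro sum.neutral) (fastforce simp: set_Pi_pmf PiE_dflt_def)
    then have "measure_pmf.prob (Pi_pmf {..<n} d (\<lambda>_. p))
           {D. 2 * sqrt (real n * v * L) + 2 * b * L < (\<Sum>i<n. \<phi> (D i))} = 0"
      using True \<open>0 \<le> real n * v * L\<close> by (subst measure_pmf_zero_iff) fastforce
    then show ?thesis
      by simp
  next
    case False
    then obtain t where t: "0 \<le> t" "t * b \<le> 1"
      and exponent: "- t * (2 * sqrt (real n * v * L) + 2 * b * L) + (real n * v) * t\<^sup>2 \<le> - L"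
      using bernstein_exponent_choice[of b "real n * v" L] b v L by auto
    have "measure_pmf.expectation p (\<lambda>z. exp (t * \<phi> z)) \<le> exp (t\<^sup>2 * v)"
    proof (rule expectation_exp_le_exp_variance[OF fin t(1) _ mean var])
      fix z assume "z \<in> set_pmf p"
      then have "t * \<bar>\<phi> z\<bar> \<le> t * b"
        using bnd t(1) by (intro mult_left_mono) auto
      then show "t * \<bar>\<phi> z\<bar> \<le> 1"
        using t(2) by linarith
    qed
    then have "measure_pmf.prob (Pi_pmf {..<n} d (\<lambda>_. p))
           {D. 2 * sqrt (real n * v * L) + 2 * b * L < (\<Sum>i<n. \<phi> (D i))}
        \<le> exp (- t * (2 * sqrt (real n * v * L) + 2 * b * L)) * exp (t\<^sup>2 * v) ^ n"
      by (rule prob_Pi_pmf_sum_gt_le[OF fin t(1)])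
    also have "\<dots> = exp (- t * (2 * sqrt (real n * v * L) + 2 * b * L) + (real n * v) * t\<^sup>2)"
      by (simp add: exp_of_nat_mult[symmetric] mult_exp_exp algebra_simps)
    also have "\<dots> \<le> exp (- L)"
      using exponent by simp
    finally show ?thesis .
  qed
qed

lemma bernstein_Pi_pmf_abs_mean:
  fixes p :: "'a pmf" and \<phi> :: "'a \<Rightarrow> real" and n :: nat
  assumes fin: "finite (set_pmf p)" and b: "0 \<le> b"
    and bnd: "\<And>z. z \<in> set_pmf p \<Longrightarrow> \<bar>\<phi> z\<bar> \<le> b"
    and mean: "measure_pmf.expectation p \<phi> = 0"
    and var: "measure_pmf.expectation p (\<lambda>z. (\<phi> z)\<^sup>2) \<le> v"
    and L: "0 \<le> L" and n: "0 < n"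
  shows "measure_pmf.prob (Pi_pmf {..<n} d (\<lambda>_. p))
           {D. 2 * sqrt (v * L / real n) + 2 * b * L / real n < \<bar>(\<Sum>i<n. \<phi> (D i)) / real n\<bar>}
         \<le> 2 * exp (- L)"
proof -
  let ?Q = "Pi_pmf {..<n} d (\<lambda>_. p)" and ?thr = "2 * sqrt (real n * v * L) + 2 * b * L"
  have int: "integrable (measure_pmf p) f" for f :: "'a \<Rightarrow> real"
    using fin by (rule integrable_measure_pmf_finite)
  have "real n * v * L = (real n)\<^sup>2 * (v * L / real n)"
    using n by (simp add: power2_eq_square)
  then have "real n * sqrt (v * L / real n) = sqrt (real n * v * L)"
    by (simp only: real_sqrt_mult real_sqrt_abs abs_of_nat)
  then have scale: "real n * (2 * sqrt (v * L / real n) + 2 * b * L / real n) = ?thr"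
    using n by (simp add: distrib_left)
  have "?thr < (\<Sum>i<n. \<phi> (D i)) \<or> ?thr < (\<Sum>i<n. - \<phi> (D i))"
    if "2 * sqrt (v * L / real n) + 2 * b * L / real n < \<bar>(\<Sum>i<n. \<phi> (D i)) / real n\<bar>" for D
  proof -
    have "real n * (2 * sqrt (v * L / real n) + 2 * b * L / real n) < real n * \<bar>(\<Sum>i<n. \<phi> (D i)) / real n\<bar>"
      using that n by (intro mult_strict_left_mono) auto
    then have "?thr < \<bar>\<Sum>i<n. \<phi> (D i)\<bar>"
      unfolding scale using n by (simp add: abs_divide)
    then show ?thesis
      by (auto simp: sum_negf abs_if split: if_splits)
  qed
  then have "measure_pmf.prob ?Q {D. 2 * sqrt (v * L / real n) + 2 * b * L / real n
                                   < \<bar>(\<Sum>i<n. \<phi> (D i)) / real n\<bar>}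
      \<le> measure_pmf.prob ?Q ({D. ?thr < (\<Sum>i<n. \<phi> (D i))} \<union> {D. ?thr < (\<Sum>i<n. - \<phi> (D i))})"
    by (intro measure_pmf.finite_measure_mono) auto
  also have "\<dots> \<le> measure_pmf.prob ?Q {D. ?thr < (\<Sum>i<n. \<phi> (D i))}
                 + measure_pmf.prob ?Q {D. ?thr < (\<Sum>i<n. - \<phi> (D i))}"
    by (rule measure_Un_le) auto
  also have "\<dots> \<le> exp (- L) + exp (- L)"
    using bernstein_Pi_pmf[OF fin b bnd mean var L]
      bernstein_Pi_pmf[OF fin b _ _ _ L, of "\<lambda>z. - \<phi> z"] bnd mean var
    by (intro add_mono) (auto simp: int)
  finally show ?thesis
    by simp
qed

section \<open>The excess loss\<close>

lemma expectation_bind_pmf_finite: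
  fixes F :: "'b \<Rightarrow> real"
  assumes "finite (set_pmf M)" and "\<And>x. x \<in> set_pmf M \<Longrightarrow> finite (set_pmf (N x))"
  shows "measure_pmf.expectation (bind_pmf M N) F
       = measure_pmf.expectation M (\<lambda>x. measure_pmf.expectation (N x) F)"
  using assms
  by (simp add: pmf_expectation_bind[of "set_pmf M"] integral_measure_pmf[of "set_pmf M"])

lemma sq_diff_sq_bounds:
  fixes G F Y W :: real
  assumes "\<bar>G\<bar> \<le> 2 * W" "\<bar>F\<bar> \<le> 3 * W" "\<bar>Y\<bar> \<le> 3 * W"
  shows "\<bar>(G - Y)\<^sup>2 - (F - Y)\<^sup>2\<bar> \<le> 55 * W\<^sup>2"
    and "((G - Y)\<^sup>2 - (F - Y)\<^sup>2)\<^sup>2 \<le> 121 * W\<^sup>2 * (G - F)\<^sup>2"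
proof -
  have eq: "(G - Y)\<^sup>2 - (F - Y)\<^sup>2 = (G - F) * (G + F - 2 * Y)"
    by (simp add: power2_eq_square algebra_simps)
  have W: "0 \<le> W"
    using assms(1) by linarith
  have diff: "\<bar>G - F\<bar> \<le> 5 * W" and sum: "\<bar>G + F - 2 * Y\<bar> \<le> 11 * W"
    using assms by linarith+
  have "\<bar>G - F\<bar> * \<bar>G + F - 2 * Y\<bar> \<le> (5 * W) * (11 * W)"
    using diff sum W by (intro mult_mono) auto
  then show "\<bar>(G - Y)\<^sup>2 - (F - Y)\<^sup>2\<bar> \<le> 55 * W\<^sup>2"
    unfolding eq abs_mult by (simp add: power2_eq_square)
  have "(G + F - 2 * Y)\<^sup>2 \<le> (11 * W)\<^sup>2"
    using power_mono[OF sum, of 2] by simp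
  then have "(G - F)\<^sup>2 * (G + F - 2 * Y)\<^sup>2 \<le> (G - F)\<^sup>2 * (11 * W)\<^sup>2"
    by (intro mult_left_mono) auto
  then show "((G - Y)\<^sup>2 - (F - Y)\<^sup>2)\<^sup>2 \<le> 121 * W\<^sup>2 * (G - F)\<^sup>2"
    unfolding eq by (simp add: power_mult_distrib mult.commute)
qed

lemma minimizer_excess_risk_bound:
  fixes \<Delta>g \<Delta>h dg dh \<epsilon> x :: real
  assumes dev_g: "\<bar>\<Delta>g - dg\<bar> \<le> 22 * sqrt (dg * x) + 220 * x"
    and dev_h: "\<bar>\<Delta>h - dh\<bar> \<le> 22 * sqrt (dh * x) + 220 * x"
    and min: "\<Delta>g \<le> \<Delta>h" and dg: "0 \<le> dg" and dh: "0 \<le> dh" and dh_le: "dh \<le> \<epsilon>"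
    and x: "0 \<le> x"
  shows "\<bar>\<Delta>g\<bar> \<le> 341 * (\<epsilon> + sqrt (x * \<epsilon>) + x)"
proof -
  have "dh * x \<le> \<epsilon> * x"
    using dh_le x by (rule mult_right_mono)
  then have "sqrt (dh * x) \<le> sqrt (x * \<epsilon>)"
    by (simp add: mult.commute)
  then have upper: "\<Delta>g \<le> \<epsilon> + 22 * sqrt (x * \<epsilon>) + 220 * x"
    using dev_h min dh_le by linarith
  \<comment> \<open>completing the square: \<open>dg - 22 sqrt (dg x) \<ge> -121 x\<close>\<close>
  have "0 \<le> (sqrt dg - 11 * sqrt x)\<^sup>2"
    by simp
  then have "0 \<le> dg - 22 * sqrt (dg * x) + 121 * x"
    using dg x by (simp add: power2_diff real_sqrt_mult power_mult_distrib algebra_simps)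
  then have lower: "- 341 * x \<le> \<Delta>g"
    using dev_g by linarith
  have "0 \<le> \<epsilon>" "0 \<le> sqrt (x * \<epsilon>)"
    using dh dh_le x by simp_all
  then show ?thesis
    unfolding abs_le_iff distrib_left using upper lower x by linarith
qed

definition td_target ::
  "(nat \<Rightarrow> nat \<Rightarrow> real) \<Rightarrow> real \<Rightarrow> real \<Rightarrow> (nat \<Rightarrow> real) \<Rightarrow> (nat \<Rightarrow> nat \<Rightarrow> real) \<Rightarrow>
   nat \<Rightarrow> nat \<Rightarrow> nat \<Rightarrow> real" where
  "td_target R \<gamma> lam V \<pi> s a s' = R s a + \<gamma> * V s' - lam * ln (\<pi> s a)"

definition excess_loss ::
  "(nat \<Rightarrow> nat \<Rightarrow> real) \<Rightarrow> (nat \<Rightarrow> nat \<Rightarrow> nat pmf) \<Rightarrow> real \<Rightarrow> real \<Rightarrow>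
   (nat \<Rightarrow> real) \<Rightarrow> (nat \<Rightarrow> nat \<Rightarrow> real) \<Rightarrow> (nat \<Rightarrow> nat \<Rightarrow> real) \<Rightarrow> nat \<times> nat \<times> nat \<Rightarrow> real" where
  "excess_loss R P \<gamma> lam V \<pi> g z = (case z of (s, a, s') \<Rightarrow>
     (g s a - td_target R \<gamma> lam V \<pi> s a s')\<^sup>2
     - (bellman R P \<gamma> lam V \<pi> s a - td_target R \<gamma> lam V \<pi> s a s')\<^sup>2)"

lemma emp_risk_diff_eq_mean_excess_loss:
  "emp_risk R \<gamma> lam n D g V \<pi> - emp_risk R \<gamma> lam n D (bellman R P \<gamma> lam V \<pi>) V \<pi>
   = (\<Sum>i<n. excess_loss R P \<gamma> lam V \<pi> g (D i)) / real n"
  unfolding emp_risk_def excess_loss_def td_target_def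
  by (simp add: diff_divide_distrib[symmetric] sum_subtractf[symmetric] split: prod.splits
        add: algebra_simps)

lemma expectation_td_target:
  assumes "finite (set_pmf (P s a))"
  shows "measure_pmf.expectation (P s a) (td_target R \<gamma> lam V \<pi> s a) = bellman R P \<gamma> lam V \<pi> s a"
  using assms unfolding td_target_def bellman_def
  by (simp add: integrable_measure_pmf_finite)

lemma expectation_excess_loss_transition:
  assumes "finite (set_pmf (P s a))"
  shows "measure_pmf.expectation (P s a) (\<lambda>s'. excess_loss R P \<gamma> lam V \<pi> g (s, a, s'))
       = (g s a - bellman R P \<gamma> lam V \<pi> s a)\<^sup>2"
proof -
  let ?f = "bellman R P \<gamma> lam V \<pi> s a" and ?Y = "td_target R \<gamma> lam V \<pi> s a"
  have "excess_loss R P \<gamma> lam V \<pi> g (s, a, s')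
      = (g s a - ?f) * (g s a + ?f) - 2 * (g s a - ?f) * ?Y s'" for s'
    unfolding excess_loss_def by (simp add: power2_eq_square algebra_simps)
  then have "measure_pmf.expectation (P s a) (\<lambda>s'. excess_loss R P \<gamma> lam V \<pi> g (s, a, s'))
      = (g s a - ?f) * (g s a + ?f) - 2 * (g s a - ?f) * measure_pmf.expectation (P s a) ?Y"
    using assms by (simp add: integrable_measure_pmf_finite)
  also have "\<dots> = (g s a - ?f)\<^sup>2"
    using expectation_td_target[where P = P and s = s and a = a, OF assms]
    by (simp add: power2_eq_square algebra_simps)
  finally show ?thesis .
qed

lemma state_action_marginal_sample_pmf:
  "map_pmf (\<lambda>z. (fst z, fst (snd z))) (sample_pmf \<mu> P) = \<mu>"
  unfolding sample_pmf_def map_bind_pmf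
  by (simp add: map_pmf_comp case_prod_beta' bind_return_pmf' flip: map_pmf_def)

lemma sqnorm_nonneg: "0 \<le> sqnorm \<mu> f"
  unfolding sqnorm_def by (intro integral_nonneg_AE) auto

section \<open>Uniform concentration of the excess risk\<close>

locale bellman_regression =
  fixes S A :: "nat set" and \<gamma> Rmax lam :: real
    and P :: "nat \<Rightarrow> nat \<Rightarrow> nat pmf" and R :: "nat \<Rightarrow> nat \<Rightarrow> real" and \<mu> :: "(nat \<times> nat) pmf"
    and Vs :: "(nat \<Rightarrow> real) set" and Ps Gs :: "(nat \<Rightarrow> nat \<Rightarrow> real) set"
  assumes setting: "setting S A \<gamma> Rmax lam P R \<mu> Vs Ps Gs"
begin

abbreviation W :: real where
  "W \<equiv> Vmax A Rmax \<gamma> lam"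

abbreviation bellman_error :: "(nat \<Rightarrow> real) \<Rightarrow> (nat \<Rightarrow> nat \<Rightarrow> real) \<Rightarrow> (nat \<Rightarrow> nat \<Rightarrow> real) \<Rightarrow> real" where
  "bellman_error V \<pi> g \<equiv> sqnorm \<mu> (\<lambda>s a. g s a - bellman R P \<gamma> lam V \<pi> s a)"

abbreviation excess_risk ::
  "nat \<Rightarrow> (nat \<Rightarrow> nat \<times> nat \<times> nat) \<Rightarrow> (nat \<Rightarrow> real) \<Rightarrow> (nat \<Rightarrow> nat \<Rightarrow> real) \<Rightarrow>
   (nat \<Rightarrow> nat \<Rightarrow> real) \<Rightarrow> real" where
  "excess_risk n D V \<pi> g \<equiv>
     emp_risk R \<gamma> lam n D g V \<pi> - emp_risk R \<gamma> lam n D (bellman R P \<gamma> lam V \<pi>) V \<pi>"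

lemma finite_classes: "finite Vs" "Vs \<noteq> {}" "finite Ps" "Ps \<noteq> {}" "finite Gs" "Gs \<noteq> {}"
  using setting unfolding setting_def by auto

lemma transition_support: "s \<in> S \<Longrightarrow> a \<in> A \<Longrightarrow> set_pmf (P s a) \<subseteq> S"
  using setting unfolding setting_def by auto

lemma reward_bounds: "s \<in> S \<Longrightarrow> a \<in> A \<Longrightarrow> 0 \<le> R s a \<and> R s a \<le> Rmax"
  using setting unfolding setting_def by auto

lemma value_bounds: "V \<in> Vs \<Longrightarrow> s \<in> S \<Longrightarrow> 0 \<le> V s \<and> V s \<le> W"
  using setting unfolding setting_def by auto

lemma policy_log_bound:
  assumes "\<pi> \<in> Ps" "s \<in> S" "a \<in> A"
  shows "\<bar>lam * ln (\<pi> s a)\<bar> \<le> W"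
proof -
  have "\<bar>ln (\<pi> s a)\<bar> \<le> W / lam" and lam: "0 < lam"
    using setting assms unfolding setting_def by auto
  then show ?thesis
    by (simp add: abs_mult pos_le_divide_eq mult.commute)
qed

lemma regressor_bounds: "g \<in> Gs \<Longrightarrow> s \<in> S \<Longrightarrow> a \<in> A \<Longrightarrow> \<bar>g s a\<bar> \<le> 2 * W"
  using setting unfolding setting_def by auto

lemma Rmax_nonneg: "0 \<le> Rmax"
  using setting reward_bounds unfolding setting_def by fastforce

lemma Rmax_le_W: "Rmax \<le> W"
proof -
  from setting have A: "finite A" "A \<noteq> {}" and \<gamma>: "0 \<le> \<gamma>" "\<gamma> < 1" and lam: "0 < lam"
    unfolding setting_def by auto
  then have "0 \<le> lam * ln (real (card A))"
    by (simp add: Suc_le_eq card_gt_0_iff)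
  then have "Rmax * (1 - \<gamma>) \<le> Rmax + lam * ln (real (card A))"
    using \<gamma> Rmax_nonneg by (smt (verit) mult_left_le)
  then show ?thesis
    using \<gamma> by (simp add: Vmax_def le_divide_eq)
qed

lemma set_sample_pmf: "set_pmf (sample_pmf \<mu> P) \<subseteq> S \<times> A \<times> S"
proof
  fix z assume "z \<in> set_pmf (sample_pmf \<mu> P)"
  then obtain s a s' where sa: "(s, a) \<in> set_pmf \<mu>" and s': "s' \<in> set_pmf (P s a)"
    and z: "z = (s, a, s')"
    by (auto simp: sample_pmf_def split: prod.splits)
  have "s \<in> S" "a \<in> A"
    using sa setting unfolding setting_def by auto
  then show "z \<in> S \<times> A \<times> S"
    using s' transition_support z by auto
qed

lemma finite_set_sample_pmf: "finite (set_pmf (sample_pmf \<mu> P))"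
  using setting set_sample_pmf unfolding setting_def by (meson finite_SigmaI finite_subset)

lemma finite_set_transition: "s \<in> S \<Longrightarrow> a \<in> A \<Longrightarrow> finite (set_pmf (P s a))"
  using setting transition_support unfolding setting_def by (meson finite_subset)

lemma td_target_abs_le:
  assumes "V \<in> Vs" "\<pi> \<in> Ps" "s \<in> S" "a \<in> A" "s' \<in> S"
  shows "\<bar>td_target R \<gamma> lam V \<pi> s a s'\<bar> \<le> 3 * W"
proof -
  have \<gamma>: "0 \<le> \<gamma>" "\<gamma> \<le> 1"
    using setting unfolding setting_def by auto
  have V: "0 \<le> V s'" "V s' \<le> W"
    using value_bounds[OF assms(1,5)] by auto
  have "\<gamma> * V s' \<le> 1 * V s'"
    using \<gamma> V by (intro mult_right_mono) auto
  moreover have "0 \<le> \<gamma> * V s'"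
    using \<gamma> V by simp
  ultimately show ?thesis
    using V reward_bounds[OF assms(3,4)] policy_log_bound[OF assms(2-4)] Rmax_le_W
    unfolding td_target_def by (simp add: abs_le_iff)
qed

lemma bellman_abs_le:
  assumes "V \<in> Vs" "\<pi> \<in> Ps" "s \<in> S" "a \<in> A"
  shows "\<bar>bellman R P \<gamma> lam V \<pi> s a\<bar> \<le> 3 * W"
proof -
  let ?Y = "td_target R \<gamma> lam V \<pi> s a"
  have fin: "finite (set_pmf (P s a))"
    using finite_set_transition[OF assms(3,4)] .
  have int: "integrable (P s a) ?Y"
    using fin by (rule integrable_measure_pmf_finite)
  have bnd: "AE s' in P s a. - (3 * W) \<le> ?Y s' \<and> ?Y s' \<le> 3 * W"
    using td_target_abs_le[OF assms] transition_support[OF assms(3,4)]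
    by (intro AE_pmfI) (force simp: abs_le_iff)
  have "- (3 * W) \<le> measure_pmf.expectation (P s a) ?Y"
    using bnd by (intro measure_pmf.integral_ge_const int) (auto elim: eventually_mono)
  moreover have "measure_pmf.expectation (P s a) ?Y \<le> 3 * W"
    using bnd by (intro measure_pmf.integral_le_const int) (auto elim: eventually_mono)
  ultimately show ?thesis
    using expectation_td_target[where P = P, OF fin] by (simp add: abs_le_iff)
qed

lemma excess_loss_bounds:
  assumes "V \<in> Vs" "\<pi> \<in> Ps" "g \<in> Gs" and z: "z \<in> set_pmf (sample_pmf \<mu> P)"
  shows "\<bar>excess_loss R P \<gamma> lam V \<pi> g z\<bar> \<le> 55 * W\<^sup>2"
    and "(excess_loss R P \<gamma> lam V \<pi> g z)\<^sup>2
           \<le> 121 * W\<^sup>2 * (g (fst z) (fst (snd z)) - bellman R P \<gamma> lam V \<pi> (fst z) (fst (snd z)))\<^sup>2"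
proof -
  obtain s a s' where z_eq: "z = (s, a, s')" and "s \<in> S" "a \<in> A" "s' \<in> S"
    using z set_sample_pmf by (cases z) auto
  note bounds = sq_diff_sq_bounds[OF regressor_bounds[OF assms(3) \<open>s \<in> S\<close> \<open>a \<in> A\<close>]
      bellman_abs_le[OF assms(1,2) \<open>s \<in> S\<close> \<open>a \<in> A\<close>]
      td_target_abs_le[OF assms(1,2) \<open>s \<in> S\<close> \<open>a \<in> A\<close> \<open>s' \<in> S\<close>]]
  show "\<bar>excess_loss R P \<gamma> lam V \<pi> g z\<bar> \<le> 55 * W\<^sup>2"
    using bounds(1) unfolding z_eq excess_loss_def by simp
  show "(excess_loss R P \<gamma> lam V \<pi> g z)\<^sup>2
           \<le> 121 * W\<^sup>2 * (g (fst z) (fst (snd z)) - bellman R P \<gamma> lam V \<pi> (fst z) (fst (snd z)))\<^sup>2"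
    using bounds(2) unfolding z_eq excess_loss_def by simp
qed

lemma expectation_sample_pmf_state_action:
  fixes h :: "nat \<Rightarrow> nat \<Rightarrow> real"
  shows
  "measure_pmf.expectation (sample_pmf \<mu> P) (\<lambda>z. h (fst z) (fst (snd z)))
   = measure_pmf.expectation \<mu> (\<lambda>(s, a). h s a)"
proof -
  have "measure_pmf.expectation (sample_pmf \<mu> P) (\<lambda>z. h (fst z) (fst (snd z)))
      = measure_pmf.expectation (map_pmf (\<lambda>z. (fst z, fst (snd z))) (sample_pmf \<mu> P)) (\<lambda>(s, a). h s a)"
    by simp
  then show ?thesis
    by (simp only: state_action_marginal_sample_pmf)
qed

lemma expectation_excess_loss:
  assumes "V \<in> Vs" "\<pi> \<in> Ps"
  shows "measure_pmf.expectation (sample_pmf \<mu> P) (excess_loss R P \<gamma> lam V \<pi> g)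
       = sqnorm \<mu> (\<lambda>s a. g s a - bellman R P \<gamma> lam V \<pi> s a)"
proof -
  have \<mu>: "set_pmf \<mu> \<subseteq> S \<times> A" and fin: "finite S" "finite A"
    using setting unfolding setting_def by auto
  then have "finite (set_pmf \<mu>)"
    by (meson finite_SigmaI finite_subset)
  moreover have "finite (set_pmf (map_pmf (\<lambda>s'. (s, a, s')) (P s a)))" if "(s, a) \<in> set_pmf \<mu>" for s a
    using that \<mu> finite_set_transition by auto
  ultimately have "measure_pmf.expectation (sample_pmf \<mu> P) (excess_loss R P \<gamma> lam V \<pi> g)
      = measure_pmf.expectation \<mu>
          (\<lambda>(s, a). measure_pmf.expectation (P s a) (\<lambda>s'. excess_loss R P \<gamma> lam V \<pi> g (s, a, s')))"
    unfolding sample_pmf_def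
    by (subst expectation_bind_pmf_finite) (simp_all add: case_prod_beta case_prod_beta')
  also have "\<dots> = sqnorm \<mu> (\<lambda>s a. g s a - bellman R P \<gamma> lam V \<pi> s a)"
    unfolding sqnorm_def using \<mu> finite_set_transition
    by (intro integral_cong_AE AE_pmfI) (auto simp: expectation_excess_loss_transition)
  finally show ?thesis .
qed

lemma variance_excess_loss:
  assumes "V \<in> Vs" "\<pi> \<in> Ps" "g \<in> Gs"
  defines "d \<equiv> sqnorm \<mu> (\<lambda>s a. g s a - bellman R P \<gamma> lam V \<pi> s a)"
  shows "measure_pmf.expectation (sample_pmf \<mu> P) (\<lambda>z. (excess_loss R P \<gamma> lam V \<pi> g z - d)\<^sup>2)
         \<le> 121 * W\<^sup>2 * d"
proof -
  let ?E = "measure_pmf.expectation (sample_pmf \<mu> P)" and ?l = "excess_loss R P \<gamma> lam V \<pi> g"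
  have int: "integrable (sample_pmf \<mu> P) f" for f :: "_ \<Rightarrow> real"
    using finite_set_sample_pmf by (rule integrable_measure_pmf_finite)
  have "?E (\<lambda>z. (?l z - d)\<^sup>2) = ?E (\<lambda>z. (?l z)\<^sup>2) - 2 * d * ?E ?l + d\<^sup>2"
    by (simp add: power2_diff int)
  also have "\<dots> = ?E (\<lambda>z. (?l z)\<^sup>2) - d\<^sup>2"
    using expectation_excess_loss[OF assms(1,2)] unfolding d_def by (simp add: power2_eq_square)
  also have "\<dots> \<le> ?E (\<lambda>z. (?l z)\<^sup>2)"
    by simp
  also have "\<dots> \<le> ?E (\<lambda>z. 121 * W\<^sup>2
                  * (g (fst z) (fst (snd z)) - bellman R P \<gamma> lam V \<pi> (fst z) (fst (snd z)))\<^sup>2)"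
    using excess_loss_bounds(2)[OF assms(1-3)] by (intro integral_mono_AE int AE_pmfI) auto
  also have "\<dots> = 121 * W\<^sup>2 * d"
    using expectation_sample_pmf_state_action[of "\<lambda>s a. (g s a - bellman R P \<gamma> lam V \<pi> s a)\<^sup>2"]
    unfolding d_def sqnorm_def by simp
  finally show ?thesis .
qed

lemma prob_excess_risk_deviation:
  assumes "V \<in> Vs" "\<pi> \<in> Ps" "g \<in> Gs" and L: "0 \<le> L" and n: "0 < n"
  defines "d \<equiv> bellman_error V \<pi> g" and "x \<equiv> W\<^sup>2 * L / real n"
  shows "measure_pmf.prob (dataset_pmf \<mu> P n)
           {D. 22 * sqrt (d * x) + 220 * x < \<bar>excess_risk n D V \<pi> g - d\<bar>} \<le> 2 * exp (- L)"
proof -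
  let ?p = "sample_pmf \<mu> P" and ?l = "excess_loss R P \<gamma> lam V \<pi> g"
  have int: "integrable (measure_pmf ?p) f" for f :: "_ \<Rightarrow> real"
    using finite_set_sample_pmf by (rule integrable_measure_pmf_finite)
  have mean: "measure_pmf.expectation ?p ?l = d"
    unfolding d_def using expectation_excess_loss[OF assms(1,2)] .
  have "d \<le> 55 * W\<^sup>2"
    unfolding mean[symmetric] using excess_loss_bounds(1)[OF assms(1-3)]
    by (intro measure_pmf.integral_le_const int AE_pmfI) (auto simp: abs_le_iff)
  moreover have "0 \<le> d"
    unfolding d_def by (rule sqnorm_nonneg)
  ultimately have bnd: "\<bar>?l z - d\<bar> \<le> 110 * W\<^sup>2" if "z \<in> set_pmf ?p" for z
    using excess_loss_bounds(1)[OF assms(1-3) that] by (simp add: abs_le_iff)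
  have centered: "measure_pmf.expectation ?p (\<lambda>z. ?l z - d) = 0"
    using mean by (simp add: int)
  have "121 * W\<^sup>2 * d * L / real n = 11\<^sup>2 * (d * x)"
    unfolding x_def by simp
  then have "sqrt (121 * W\<^sup>2 * d * L / real n) = 11 * sqrt (d * x)"
    by (simp only: real_sqrt_mult real_sqrt_abs abs_numeral)
  then have threshold: "2 * sqrt (121 * W\<^sup>2 * d * L / real n) + 2 * (110 * W\<^sup>2) * L / real n
      = 22 * sqrt (d * x) + 220 * x"
    unfolding x_def by simp
  have "excess_risk n D V \<pi> g - d = (\<Sum>i<n. ?l (D i) - d) / real n" for D
    using n by (simp add: emp_risk_diff_eq_mean_excess_loss sum_subtractf field_simps)
  then show ?thesis
    using bernstein_Pi_pmf_abs_mean[OF finite_set_sample_pmf _ bnd centered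
        variance_excess_loss[OF assms(1-3), folded d_def] L n, of "(0, 0, 0)", unfolded threshold]
    unfolding dataset_pmf_def by simp
qed

lemma ln_card_classes_div_nonneg:
  assumes "0 < \<delta>" "\<delta> < 1"
  shows "0 \<le> ln (real (card Vs) * real (card Ps) * real (card Gs) / \<delta>)"
proof -
  have "0 < card Vs * card Ps * card Gs"
    using finite_classes by (simp add: card_gt_0_iff)
  then have "1 \<le> real (card Vs) * real (card Ps) * real (card Gs)"
    by (metis Suc_le_eq of_nat_1 of_nat_le_iff of_nat_mult One_nat_def)
  then show ?thesis
    using assms by simp
qed

lemma prob_some_excess_risk_deviation:
  assumes n: "0 < n" and \<delta>: "0 < \<delta>" "\<delta> < 1"
  defines "x \<equiv> W\<^sup>2 * ln (real (card Vs) * real (card Ps) * real (card Gs) / \<delta>) / real n"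
  shows "measure_pmf.prob (dataset_pmf \<mu> P n)
           {D. \<exists>V\<in>Vs. \<exists>\<pi>\<in>Ps. \<exists>g\<in>Gs. 22 * sqrt (bellman_error V \<pi> g * x) + 220 * x
                 < \<bar>excess_risk n D V \<pi> g - bellman_error V \<pi> g\<bar>} \<le> 2 * \<delta>"
    (is "measure_pmf.prob ?Q ?bad \<le> _")
proof -
  define N where "N = real (card Vs) * real (card Ps) * real (card Gs)"
  define L where "L = ln (N / \<delta>)"
  define I where "I = Vs \<times> Ps \<times> Gs"
  define bad where "bad = (\<lambda>(V, \<pi>, g). {D. 22 * sqrt (bellman_error V \<pi> g * x) + 220 * x
                 < \<bar>excess_risk n D V \<pi> g - bellman_error V \<pi> g\<bar>})"
  have card_I: "real (card I) = N"
    unfolding I_def N_def by (simp add: card_cartesian_product)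
  have "0 < card I"
    unfolding I_def using finite_classes by (simp add: card_gt_0_iff)
  then have "0 < N"
    using card_I by linarith
  then have exp_L: "exp (- L) = \<delta> / N"
    unfolding L_def using \<delta> by (simp add: exp_minus)
  have L: "0 \<le> L"
    unfolding L_def N_def using ln_card_classes_div_nonneg[OF \<delta>] .
  have "measure_pmf.prob (dataset_pmf \<mu> P n) (\<Union>t\<in>I. bad t) \<le> (\<Sum>t\<in>I. 2 * exp (- L))"
  proof (rule order_trans[OF measure_UNION_le sum_mono])
    show "finite I"
      unfolding I_def using finite_classes by simp
    fix t assume "t \<in> I"
    then obtain V \<pi> g where "t = (V, \<pi>, g)" "V \<in> Vs" "\<pi> \<in> Ps" "g \<in> Gs"
      unfolding I_def by auto
    then show "measure_pmf.prob (dataset_pmf \<mu> P n) (bad t) \<le> 2 * exp (- L)"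
      using prob_excess_risk_deviation[OF _ _ _ L n]
      unfolding bad_def x_def L_def N_def by simp
  qed simp
  also have "\<dots> = 2 * \<delta>"
    using \<open>0 < N\<close> card_I unfolding exp_L by simp
  also have "(\<Union>t\<in>I. bad t) = ?bad"
    unfolding I_def bad_def by blast
  finally show ?thesis .
qed

lemma exists_bellman_error_le_eps_approx:
  assumes "V \<in> Vs" "\<pi> \<in> Ps"
  shows "\<exists>h\<in>Gs. bellman_error V \<pi> h \<le> eps_approx \<mu> R P \<gamma> lam Vs Ps Gs"
proof -
  let ?m = "\<lambda>(V, \<pi>). Min ((\<lambda>h. bellman_error V \<pi> h) ` Gs)"
  obtain h where "h \<in> Gs" "bellman_error V \<pi> h = ?m (V, \<pi>)"
    using Min_in[of "(\<lambda>h. bellman_error V \<pi> h) ` Gs"] finite_classes by fastforce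
  moreover have "?m (V, \<pi>) \<le> Max (?m ` (Vs \<times> Ps))"
    using assms finite_classes by (intro Max_ge) auto
  ultimately have "bellman_error V \<pi> h \<le> eps_approx \<mu> R P \<gamma> lam Vs Ps Gs"
    unfolding eps_approx_def by simp
  then show ?thesis
    using \<open>h \<in> Gs\<close> by blast
qed

lemma excess_risk_bound:
  assumes n: "0 < n" and \<delta>: "0 < \<delta>" "\<delta> < 1"
  defines "\<epsilon> \<equiv> eps_approx \<mu> R P \<gamma> lam Vs Ps Gs"
    and "x \<equiv> W\<^sup>2 * ln (real (card Vs) * real (card Ps) * real (card Gs) / \<delta>) / real n"
  shows "1 - 2 * \<delta> \<le> measure_pmf.prob (dataset_pmf \<mu> P n)
           {D. \<forall>V\<in>Vs. \<forall>\<pi>\<in>Ps. \<forall>g\<in>Gs.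
                 (\<forall>g'\<in>Gs. emp_risk R \<gamma> lam n D g V \<pi> \<le> emp_risk R \<gamma> lam n D g' V \<pi>) \<longrightarrow>
                 \<bar>excess_risk n D V \<pi> g\<bar> \<le> 341 * (\<epsilon> + sqrt (x * \<epsilon>) + x)}"
    (is "_ \<le> measure_pmf.prob ?Q ?good")
proof -
  define bad where "bad = {D. \<exists>V\<in>Vs. \<exists>\<pi>\<in>Ps. \<exists>g\<in>Gs. 22 * sqrt (bellman_error V \<pi> g * x) + 220 * x
                 < \<bar>excess_risk n D V \<pi> g - bellman_error V \<pi> g\<bar>}"
  have "0 \<le> x"
    unfolding x_def using ln_card_classes_div_nonneg[OF \<delta>] by simp
  have "- bad \<subseteq> ?good"
  proof safe
    fix D V \<pi> g assume "D \<notin> bad" "V \<in> Vs" "\<pi> \<in> Ps" "g \<in> Gs"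
      and min: "\<forall>g'\<in>Gs. emp_risk R \<gamma> lam n D g V \<pi> \<le> emp_risk R \<gamma> lam n D g' V \<pi>"
    obtain h where "h \<in> Gs" "bellman_error V \<pi> h \<le> \<epsilon>"
      using exists_bellman_error_le_eps_approx[OF \<open>V \<in> Vs\<close> \<open>\<pi> \<in> Ps\<close>] unfolding \<epsilon>_def by blast
    show "\<bar>excess_risk n D V \<pi> g\<bar> \<le> 341 * (\<epsilon> + sqrt (x * \<epsilon>) + x)"
    proof (rule minimizer_excess_risk_bound)
      show "\<bar>excess_risk n D V \<pi> g - bellman_error V \<pi> g\<bar>
          \<le> 22 * sqrt (bellman_error V \<pi> g * x) + 220 * x"
        using \<open>D \<notin> bad\<close> \<open>V \<in> Vs\<close> \<open>\<pi> \<in> Ps\<close> \<open>g \<in> Gs\<close> unfolding bad_def by (simp add: not_less)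
      show "\<bar>excess_risk n D V \<pi> h - bellman_error V \<pi> h\<bar>
          \<le> 22 * sqrt (bellman_error V \<pi> h * x) + 220 * x"
        using \<open>D \<notin> bad\<close> \<open>V \<in> Vs\<close> \<open>\<pi> \<in> Ps\<close> \<open>h \<in> Gs\<close> unfolding bad_def by (simp add: not_less)
      show "excess_risk n D V \<pi> g \<le> excess_risk n D V \<pi> h"
        using min \<open>h \<in> Gs\<close> by simp
    qed (use sqnorm_nonneg \<open>bellman_error V \<pi> h \<le> \<epsilon>\<close> \<open>0 \<le> x\<close> in auto)
  qed
  then have "measure_pmf.prob ?Q (- bad) \<le> measure_pmf.prob ?Q ?good"
    by (intro measure_pmf.finite_measure_mono) auto
  moreover have "measure_pmf.prob ?Q (- bad) = 1 - measure_pmf.prob ?Q bad"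
    using measure_pmf.prob_compl[of bad ?Q] by (simp add: Compl_eq_Diff_UNIV)
  ultimately show ?thesis
    using prob_some_excess_risk_deviation[OF n \<delta>] unfolding bad_def x_def by linarith
qed

end

theorem mainTheorem8:
  shows "\<exists>c::real. c > 0 \<and>
    (\<forall>(S::nat set) (A::nat set) \<gamma> Rmax lam P R \<mu> Vs Ps Gs (n::nat) \<delta>.
      setting S A \<gamma> Rmax lam P R \<mu> Vs Ps Gs \<and> 0 < n \<and> 0 < \<delta> \<and> \<delta> < 1 \<longrightarrow>
      (let \<epsilon> = eps_approx \<mu> R P \<gamma> lam Vs Ps Gs;
           \<iota> = (Vmax A Rmax \<gamma> lam)\<^sup>2 *
               ln (real (card Vs) * real (card Ps) * real (card Gs) / \<delta>)
       in measure_pmf.prob (dataset_pmf \<mu> P n)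
            {D. \<forall>V\<in>Vs. \<forall>\<pi>\<in>Ps. \<forall>g\<in>Gs.
                  (\<forall>g'\<in>Gs. emp_risk R \<gamma> lam n D g V \<pi> \<le> emp_risk R \<gamma> lam n D g' V \<pi>) \<longrightarrow>
                  \<bar>emp_risk R \<gamma> lam n D g V \<pi> - emp_risk R \<gamma> lam n D (bellman R P \<gamma> lam V \<pi>) V \<pi>\<bar>
                  \<le> c * (\<epsilon> + sqrt (\<iota> / real n * \<epsilon>) + \<iota> / real n)}
          \<ge> 1 - 2 * \<delta>))"
  unfolding Let_def
  by (intro exI[of _ "341::real"] conjI allI impI)
     (simp, blast intro: bellman_regression.excess_risk_bound bellman_regression.intro)

end
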